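(* Let $n\ge 2$ be an integer. Then $\gamma^{SLD}(P_n\square P_2)=n+1$ if $n$ is odd and $\gamma^{SLD}(P_n\square P_2)=n+2$ if $n$ is even.
   Context: $P_k$ denotes the path on $k$ vertices. The Cartesian product $G\square H$ has vertex set $V(G)\times V(H)$, with $(u,v)$ adjacent to $(u',v')$ iff either $u=u'$ and $vv'\in E(H)$, or $uu'\in E(G)$ and $v=v'$. For a vertex $u$, $N[u]$ is its closed neighbourhood. A code is a non-empty subset $C$ of the vertex set $V$; $I(C;u)=N[u]\cap C$. A code $C$ is self-locating-dominating if for every $u\in V\setminus C$ we have $I(C;u)\neq\emptyset$ and $\bigcap_{c\in I(C;u)}N[c]=\{u\}$; $\gamma^{SLD}$ is the minimum size of such a code. *)

theory Defs
  imports Main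
begin

text \<open>A (simple, undirected) graph is given by a vertex set V and an adjacency
relation E (assumed symmetric and irreflexive on V for the graphs considered).\<close>

definition closed_nbhd :: "'a set \<Rightarrow> ('a \<Rightarrow> 'a \<Rightarrow> bool) \<Rightarrow> 'a \<Rightarrow> 'a set" where
  "closed_nbhd V E u = {v \<in> V. v = u \<or> E u v}"

definition I_set :: "'a set \<Rightarrow> ('a \<Rightarrow> 'a \<Rightarrow> bool) \<Rightarrow> 'a set \<Rightarrow> 'a \<Rightarrow> 'a set" where
  "I_set V E C u = closed_nbhd V E u \<inter> C"

definition self_locating_dominating ::
  "'a set \<Rightarrow> ('a \<Rightarrow> 'a \<Rightarrow> bool) \<Rightarrow> 'a set \<Rightarrow> bool" where
  "self_locating_dominating V E C \<longleftrightarrow>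
     C \<subseteq> V \<and> C \<noteq> {} \<and>
     (\<forall>u \<in> V - C. I_set V E C u \<noteq> {} \<and>
        (\<Inter>c \<in> I_set V E C u. closed_nbhd V E c) = {u})"

definition gamma_SLD :: "'a set \<Rightarrow> ('a \<Rightarrow> 'a \<Rightarrow> bool) \<Rightarrow> nat" where
  "gamma_SLD V E = (LEAST k. \<exists>C. self_locating_dominating V E C \<and> finite C \<and> card C = k)"

definition path_V :: "nat \<Rightarrow> nat set" where "path_V k = {0..<k}"
definition path_E :: "nat \<Rightarrow> nat \<Rightarrow> bool" where "path_E i j \<longleftrightarrow> i + 1 = j \<or> j + 1 = i"

definition cart_V :: "'a set \<Rightarrow> 'b set \<Rightarrow> ('a \<times> 'b) set" where
  "cart_V V1 V2 = V1 \<times> V2"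
definition cart_E :: "('a \<Rightarrow> 'a \<Rightarrow> bool) \<Rightarrow> ('b \<Rightarrow> 'b \<Rightarrow> bool) \<Rightarrow> 'a \<times> 'b \<Rightarrow> 'a \<times> 'b \<Rightarrow> bool" where
  "cart_E E1 E2 p q \<longleftrightarrow>
     (fst p = fst q \<and> E2 (snd p) (snd q)) \<or> (E1 (fst p) (fst q) \<and> snd p = snd q)"

end

theory Submission
  imports Defs
begin

text \<open>In a self-locating-dominating code of the ladder \<open>P\<^sub>n \<box> P\<^sub>2\<close>, a vertex outside the
  code must have both of its neighbours in the same row inside the code: otherwise its
  codeword neighbours (at most two) have a second common closed neighbour. So each row
  contains its first vertex and every gap in a row is followed by a codeword, which forces
  at least \<open>(n + 2) div 2\<close> codewords per row. The code consisting of all even columns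
  together with the last column attains this bound.\<close>

lemma sld_locates_nonmember:
  assumes "self_locating_dominating V E C" "u \<in> V - C"
    and "\<forall>c \<in> I_set V E C u. w \<in> closed_nbhd V E c"
  shows "w = u"
  using assms unfolding self_locating_dominating_def by blast

lemma card_ge_if_gaps_followed_by_members:
  fixes S :: "nat set"
  assumes "S \<subseteq> {..<n}" "0 \<in> S" "\<And>i. i < n \<Longrightarrow> i \<notin> S \<Longrightarrow> i + 1 \<in> S"
  shows "(n + 2) div 2 \<le> card S"
proof -
  have fin: "finite S"
    using assms(1) finite_subset by blast
  have "Suc ` ({..<n} - S) \<subseteq> S - {0}"
    using assms(3) by auto
  then have "card (Suc ` ({..<n} - S)) \<le> card (S - {0})"
    using fin by (intro card_mono) auto
  then have "card ({..<n} - S) \<le> card S - 1"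
    using fin assms(2) by (simp add: card_image)
  moreover have "card ({..<n} - S) = n - card S"
    using assms(1) fin by (simp add: card_Diff_subset)
  moreover have "card S \<ge> 1" and "card S \<le> n"
    using assms(1,2) fin card_mono[OF _ assms(1)] by (auto simp: Suc_le_eq card_gt_0_iff)
  ultimately show ?thesis
    by linarith
qed

lemma card_eq_card_rows_if_two_rows:
  assumes "finite C" "snd ` C \<subseteq> {a, b}" "a \<noteq> b"
  shows "card C = card {i. (i, a) \<in> C} + card {i. (i, b) \<in> C}"
proof -
  let ?row = "\<lambda>c. {i. (i, c) \<in> C}"
  have rows: "C = (\<lambda>i. (i, a)) ` ?row a \<union> (\<lambda>i. (i, b)) ` ?row b"
  proof
    show "C \<subseteq> (\<lambda>i. (i, a)) ` ?row a \<union> (\<lambda>i. (i, b)) ` ?row b"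
      using assms(2) by (auto intro: image_eqI)
  qed auto
  have "finite (?row c)" for c
  proof (rule finite_subset)
    show "?row c \<subseteq> fst ` C"
      by (metis (mono_tags) fst_conv image_eqI mem_Collect_eq subsetI)
  qed (use assms(1) in simp)
  moreover have "(\<lambda>i. (i, a)) ` ?row a \<inter> (\<lambda>i. (i, b)) ` ?row b = {}"
    using assms(3) by auto
  ultimately have "card C = card ((\<lambda>i. (i, a)) ` ?row a) + card ((\<lambda>i. (i, b)) ` ?row b)"
    by (subst rows) (simp add: card_Un_disjoint)
  then show ?thesis
    by (simp add: card_image inj_on_def)
qed

lemma card_even_below: "card {i. i < n \<and> even i} = (n + 1) div 2"
proof (induction n)
  case (Suc n)
  have "{i. i < Suc n \<and> even i} = {i. i < n \<and> even i} \<union> (if even n then {n} else {})"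
    by (auto simp: less_Suc_eq)
  then show ?case
    using Suc by (auto simp: card_insert_if)
qed simp

abbreviation ladder_V :: "nat \<Rightarrow> (nat \<times> nat) set" where
  "ladder_V n \<equiv> cart_V (path_V n) (path_V 2)"

abbreviation ladder_E :: "nat \<times> nat \<Rightarrow> nat \<times> nat \<Rightarrow> bool" where
  "ladder_E \<equiv> cart_E path_E path_E"

lemma mem_ladder_V [simp]: "(i, j) \<in> ladder_V n \<longleftrightarrow> i < n \<and> j < 2"
  by (simp add: cart_V_def path_V_def)

lemma ladder_closed_nbhd:
  "(x, y) \<in> closed_nbhd (ladder_V n) ladder_E (i, j) \<longleftrightarrow>
     x < n \<and> y < 2 \<and>
     (x = i \<and> (y = j \<or> y + 1 = j \<or> j + 1 = y) \<or> y = j \<and> (x + 1 = i \<or> i + 1 = x))"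
  by (auto simp: closed_nbhd_def cart_E_def path_E_def)

lemma ladder_sld_succ_mem:
  assumes S: "self_locating_dominating (ladder_V n) ladder_E C"
    and u: "i < n" "j < 2" "(i, j) \<notin> C"
  shows "i + 1 < n \<and> (i + 1, j) \<in> C"
proof (rule ccontr)
  assume no_succ: "\<not> (i + 1 < n \<and> (i + 1, j) \<in> C)"
  \<comment> \<open>adjacent to both candidate codeword neighbours \<open>(i, 1 - j)\<close> and \<open>(i - 1, j)\<close>\<close>
  define w where "w = (if i = 0 then (i, 1 - j) else (i - 1, 1 - j))"
  have "\<forall>c \<in> I_set (ladder_V n) ladder_E C (i, j). w \<in> closed_nbhd (ladder_V n) ladder_E c"
  proof
    fix c assume "c \<in> I_set (ladder_V n) ladder_E C (i, j)"
    then have "c \<in> C" "c \<in> closed_nbhd (ladder_V n) ladder_E (i, j)"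
      by (auto simp: I_set_def)
    moreover obtain a b where "c = (a, b)"
      by fastforce
    ultimately have "c = (i, 1 - j) \<or> (0 < i \<and> c = (i - 1, j))"
      using u no_succ by (auto simp: ladder_closed_nbhd)
    then show "w \<in> closed_nbhd (ladder_V n) ladder_E c"
      using u by (auto simp: w_def ladder_closed_nbhd)
  qed
  then have "w = (i, j)"
    using sld_locates_nonmember[OF S] u by simp
  moreover have "1 - j \<noteq> j"
    using u by arith
  ultimately show False
    by (auto simp: w_def split: if_splits)
qed

lemma ladder_sld_pred_mem:
  assumes S: "self_locating_dominating (ladder_V n) ladder_E C"
    and u: "i < n" "j < 2" "(i, j) \<notin> C"
  shows "0 < i \<and> (i - 1, j) \<in> C"
proof (rule ccontr)
  assume no_pred: "\<not> (0 < i \<and> (i - 1, j) \<in> C)"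
  define w where "w = (if i + 1 < n then (i + 1, 1 - j) else (i, 1 - j))"
  have "\<forall>c \<in> I_set (ladder_V n) ladder_E C (i, j). w \<in> closed_nbhd (ladder_V n) ladder_E c"
  proof
    fix c assume "c \<in> I_set (ladder_V n) ladder_E C (i, j)"
    then have "c \<in> C" "c \<in> closed_nbhd (ladder_V n) ladder_E (i, j)"
      by (auto simp: I_set_def)
    moreover obtain a b where "c = (a, b)"
      by fastforce
    ultimately have "c = (i, 1 - j) \<or> (i + 1 < n \<and> c = (i + 1, j))"
      using u no_pred by (auto simp: ladder_closed_nbhd)
    then show "w \<in> closed_nbhd (ladder_V n) ladder_E c"
      using u by (auto simp: w_def ladder_closed_nbhd)
  qed
  then have "w = (i, j)"
    using sld_locates_nonmember[OF S] u by simp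
  moreover have "1 - j \<noteq> j"
    using u by arith
  ultimately show False
    by (auto simp: w_def split: if_splits)
qed

lemma ladder_sld_row_card:
  assumes S: "self_locating_dominating (ladder_V n) ladder_E C" and "j < 2"
  shows "(n + 2) div 2 \<le> card {i. (i, j) \<in> C}"
proof (rule card_ge_if_gaps_followed_by_members)
  have CV: "C \<subseteq> ladder_V n"
    using S by (simp add: self_locating_dominating_def)
  then show "{i. (i, j) \<in> C} \<subseteq> {..<n}"
    by auto
  show "0 \<in> {i. (i, j) \<in> C}"
  proof (rule ccontr)
    obtain a b where "(a, b) \<in> C"
      using S by (auto simp: self_locating_dominating_def)
    then have "0 < n"
      using CV by auto
    moreover assume "0 \<notin> {i. (i, j) \<in> C}"
    ultimately show False
      using ladder_sld_pred_mem[OF S, of 0 j] \<open>j < 2\<close> by simp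
  qed
  show "i + 1 \<in> {i. (i, j) \<in> C}" if "i < n" "i \<notin> {i. (i, j) \<in> C}" for i
    using ladder_sld_succ_mem[OF S, of i j] that \<open>j < 2\<close> by simp
qed

lemma ladder_sld_card_ge:
  assumes S: "self_locating_dominating (ladder_V n) ladder_E C" and "finite C"
  shows "2 * ((n + 2) div 2) \<le> card C"
proof -
  have "snd ` C \<subseteq> {0, 1}"
    using S by (auto simp: self_locating_dominating_def cart_V_def path_V_def)
  then have "card C = card {i. (i, 0) \<in> C} + card {i. (i, 1) \<in> C}"
    by (rule card_eq_card_rows_if_two_rows[OF \<open>finite C\<close> _ zero_neq_one])
  then show ?thesis
    using ladder_sld_row_card[OF S, of 0] ladder_sld_row_card[OF S, of 1] by simp
qed

definition ladder_code :: "nat \<Rightarrow> (nat \<times> nat) set" where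
  "ladder_code n = {i. i < n \<and> (even i \<or> i = n - 1)} \<times> {0, 1}"

lemma finite_ladder_code: "finite (ladder_code n)"
  by (simp add: ladder_code_def)

lemma card_ladder_code:
  assumes "n \<ge> 1"
  shows "card (ladder_code n) = 2 * ((n + 2) div 2)"
proof -
  have "{i. i < n \<and> (even i \<or> i = n - 1)} = insert (n - 1) {i. i < n \<and> even i}"
    using assms by auto
  moreover have "n - 1 \<in> {i. i < n \<and> even i} \<longleftrightarrow> odd n"
    using assms by auto
  ultimately have "card {i. i < n \<and> (even i \<or> i = n - 1)} = (n + 2) div 2"
    using card_even_below[of n] by (auto simp: card_insert_if)
  then show ?thesis
    by (simp add: ladder_code_def card_cartesian_product)
qed

lemma ladder_code_sld:
  assumes "n \<ge> 1"
  shows "self_locating_dominating (ladder_V n) ladder_E (ladder_code n)"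
  unfolding self_locating_dominating_def
proof (intro conjI ballI)
  show "ladder_code n \<subseteq> ladder_V n"
    by (auto simp: ladder_code_def)
  have "(0, 0) \<in> ladder_code n"
    using assms by (simp add: ladder_code_def)
  then show "ladder_code n \<noteq> {}"
    by blast
  fix u assume u: "u \<in> ladder_V n - ladder_code n"
  then obtain i j where ij: "u = (i, j)" "i < n" "j < 2" "odd i" "i \<noteq> n - 1"
    by (cases u) (auto simp: ladder_code_def less_2_cases_iff)
  then have nbrs: "(i - 1, j) \<in> I_set (ladder_V n) ladder_E (ladder_code n) u"
      "(i + 1, j) \<in> I_set (ladder_V n) ladder_E (ladder_code n) u"
    by (auto simp: I_set_def ladder_code_def ladder_closed_nbhd less_2_cases_iff elim: oddE)
  then show "I_set (ladder_V n) ladder_E (ladder_code n) u \<noteq> {}"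
    by blast
  have "closed_nbhd (ladder_V n) ladder_E (i - 1, j) \<inter> closed_nbhd (ladder_V n) ladder_E (i + 1, j)
      \<subseteq> {u}"
  proof
    fix w
    assume "w \<in> closed_nbhd (ladder_V n) ladder_E (i - 1, j)
      \<inter> closed_nbhd (ladder_V n) ladder_E (i + 1, j)"
    moreover obtain a b where "w = (a, b)"
      by fastforce
    moreover have "0 < i"
      using \<open>odd i\<close> by (cases i) auto
    ultimately show "w \<in> {u}"
      using ij by (auto simp: ladder_closed_nbhd)
  qed
  moreover have "u \<in> closed_nbhd (ladder_V n) ladder_E c"
    if "c \<in> I_set (ladder_V n) ladder_E (ladder_code n) u" for c
    using that ij by (cases c) (auto simp: I_set_def ladder_closed_nbhd)
  ultimately show "(\<Inter>c \<in> I_set (ladder_V n) ladder_E (ladder_code n) u.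
      closed_nbhd (ladder_V n) ladder_E c) = {u}"
    using nbrs by blast
qed

theorem mainTheorem17:
  fixes n :: nat
  assumes "n \<ge> 2"
  shows "gamma_SLD (cart_V (path_V n) (path_V 2)) (cart_E path_E path_E)
           = (if odd n then n + 1 else n + 2)"
proof -
  have "gamma_SLD (ladder_V n) ladder_E = 2 * ((n + 2) div 2)"
    unfolding gamma_SLD_def
  proof (rule Least_equality)
    show "\<exists>C. self_locating_dominating (ladder_V n) ladder_E C \<and> finite C
        \<and> card C = 2 * ((n + 2) div 2)"
      using assms ladder_code_sld card_ladder_code
      by (intro exI[of _ "ladder_code n"]) (simp add: finite_ladder_code)
  qed (use ladder_sld_card_ge in blast)
  moreover have "2 * ((n + 2) div 2) = (if odd n then n + 1 else n + 2)"
    by presburger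
  ultimately show ?thesis
    by simp
qed

end
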